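(* Let $M\subset[0,1)$ be measurable with $M\cap s(M)=\emptyset$ and $M\cup s(M)=[0,1)$ up to null sets, $m_0=\operatorname{Per}(\chi_M)$, and let $F\subset\mathbb{R}$, $\hat\varphi=\chi_F$, satisfy $\hat\varphi(x)=\prod_{n\ge1}m_0(x/2^n)$, i.e. $F=\bigcap_{n\ge1}2^n\operatorname{Per}(M)$. The following are equivalent: (i) $\lim_{n\to\infty}\hat\varphi(x/2^n)=1$ for a.e. $x\in\mathbb{R}$; (ii) $\bigcup_{n\ge1}2^nF=\mathbb{R}$ up to measure zero; (iii) $\lim_{n\to\infty}m_0(x/2^n)=1$ for a.e. $x\in\mathbb{R}$; (iv) $\lim_{n\to\infty}m_0(\tau_0^nx)=1$ and $\lim_{n\to\infty}m_0(\tau_1^nx)=1$ for a.e. $x\in[0,1)$; (v) for a.e. $x\in[0,1)$, the chosen paths satisfy $\omega(\tau_0^nx)=000\cdots$ and $\omega(\tau_1^nx)=111\cdots$ for all sufficiently large $n$; (vi) for a.e. $x\in[0,1)$, the set $A(x)$ contains the words $\omega_1\cdots\omega_n000\cdots$ and $\omega_1\cdots\omega_n111\cdots$ for all $n\ge0$ and all $\omega_1,\dots,\omega_n\in\{0,1\}$.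
   Context: On $[0,1)$: $\tau_0(x)=x/2$, $\tau_1(x)=(x+1)/2$, $s(x)=(x+\frac12)\bmod1$. $\operatorname{Per}(A)=\bigcup_{k\in\mathbb{Z}}(A+k)$, $\operatorname{Per}(\chi_M)(x)=\sum_k\chi_M(x+k)$. Chosen path: for (a.e.) $x\in[0,1)$ exactly one of $\tau_0x,\tau_1x$ lies in $M$; let $\omega_1$ be the digit with $\tau_{\omega_1}x\in M$ and inductively $\omega_{n+1}$ the unique digit with $\tau_{\omega_{n+1}}\tau_{\omega_n}\cdots\tau_{\omega_1}x\in M$; $\omega(x)=\omega_1\omega_2\cdots\in\{0,1\}^{\mathbb{N}}$. $A(x)=\{\eta_1\cdots\eta_n\,\omega(\tau_{\eta_n}\cdots\tau_{\eta_1}x)\mid n\ge0,\ \eta_i\in\{0,1\}\}$. *)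

theory Defs
  imports "HOL-Analysis.Analysis"
begin

definition tau0 :: "real \<Rightarrow> real" where "tau0 x = x / 2"
definition tau1 :: "real \<Rightarrow> real" where "tau1 x = (x + 1) / 2"
definition tau :: "nat \<Rightarrow> real \<Rightarrow> real" where "tau d = (if d = 0 then tau0 else tau1)"
definition shift :: "real \<Rightarrow> real" where "shift x = frac (x + 1/2)"

definition Per :: "real set \<Rightarrow> real set" where
  "Per A = (\<Union>k::int. (\<lambda>y. y + of_int k) ` A)"

definition Per_chi :: "real set \<Rightarrow> real \<Rightarrow> real" where
  "Per_chi M x = (\<Sum>\<^sub>\<infinity>k::int. indicator M (x + of_int k))"

definition dil :: "real \<Rightarrow> real set \<Rightarrow> real set" where
  "dil c A = (\<lambda>y. c * y) ` A"

definition Fset :: "real set \<Rightarrow> real set" where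
  "Fset M = (\<Inter>n\<in>{1..}. dil (2 ^ n) (Per M))"

text \<open>Chosen path. The digit is the unique d with tau_d x in M; where this is not
  unique (a null set of starting points), we use the convention: 0 if tau0 x in M, else 1.\<close>
definition digit :: "real set \<Rightarrow> real \<Rightarrow> nat" where
  "digit M x = (if tau0 x \<in> M then 0 else 1)"

fun pathpt :: "real set \<Rightarrow> real \<Rightarrow> nat \<Rightarrow> real" where
  "pathpt M x 0 = x"
| "pathpt M x (Suc n) = tau (digit M (pathpt M x n)) (pathpt M x n)"

text \<open>omega M x n is the digit omega_(n+1)(x) (0-indexed infinite word).\<close>
definition omega :: "real set \<Rightarrow> real \<Rightarrow> nat \<Rightarrow> nat" where
  "omega M x n = digit M (pathpt M x n)"

definition conc :: "nat list \<Rightarrow> (nat \<Rightarrow> nat) \<Rightarrow> nat \<Rightarrow> nat" where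
  "conc u w = (\<lambda>i. if i < length u then u ! i else w (i - length u))"

definition Aset :: "real set \<Rightarrow> real \<Rightarrow> (nat \<Rightarrow> nat) set" where
  "Aset M x = {conc eta (omega M (foldl (\<lambda>y d. tau d y) x eta)) | eta. set eta \<subseteq> {0, 1}}"

end

theory Submission
  imports Defs
begin

text \<open>All six conditions reduce to one property of a point x: x / 2^n lies in Per M for all
  large n. For (i)--(iii) this is an unwinding of the definitions, since m0 is the indicator of
  Per M and x / 2^n \<in> F means x / 2^(n+j) \<in> Per M for all j \<ge> 1. The property is invariant
  under x \<mapsto> x / 2 and Per M is 1-periodic, so it holds a.e. on the line iff for a.e.
  x \<in> [0,1) it holds at x and at x - 1; along \<tau>0^n x = x / 2^n and \<tau>1^n x = 1 + (x - 1) / 2^n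
  this is (iv). The chosen path from y is constantly d iff d is the chosen digit all along the
  \<tau>_d-orbit of y. For d = 0 that says \<tau>0^(n+1) x \<in> M; for d = 1 it says \<tau>0 (\<tau>1^n x) \<notin> M,
  which equals \<tau>1^(n+1) x \<in> M because s swaps \<tau>0 z and \<tau>1 z, so that for a.e. z exactly one
  of them lies in M. This gives (v). Finally (vi) is (v) at the countably many points
  \<tau>_\<eta> x, which are affine images of x, and affine maps preserve null sets.\<close>

section \<open>Periodization and dilation\<close>

lemma mem_Per_iff_frac:
  assumes "A \<subseteq> {0..<1}"
  shows "z \<in> Per A \<longleftrightarrow> frac z \<in> A"
proof
  assume "z \<in> Per A"
  then obtain k a where "a \<in> A" "z = a + of_int k" unfolding Per_def by auto
  moreover have "frac a = a" using \<open>a \<in> A\<close> assms by (auto simp: frac_eq)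
  ultimately show "frac z \<in> A" by (simp add: frac_def)
next
  assume "frac z \<in> A"
  moreover have "z = frac z + of_int \<lfloor>z\<rfloor>" by (simp add: frac_def)
  ultimately show "z \<in> Per A" unfolding Per_def by blast
qed

lemma mem_Per_iff_mem:
  assumes "A \<subseteq> {0..<1}" "z \<in> {0..<1}"
  shows "z \<in> Per A \<longleftrightarrow> z \<in> A"
  using assms by (simp add: mem_Per_iff_frac frac_eq)

lemma add_one_mem_Per_iff: "z + 1 \<in> Per A \<longleftrightarrow> z \<in> Per A"
proof
  assume "z + 1 \<in> Per A"
  then obtain k a where "a \<in> A" "z + 1 = a + of_int k" unfolding Per_def by auto
  then have "z = a + of_int (k - 1)" by simp
  with \<open>a \<in> A\<close> show "z \<in> Per A" unfolding Per_def by blast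
next
  assume "z \<in> Per A"
  then obtain k a where "a \<in> A" "z = a + of_int k" unfolding Per_def by auto
  then have "z + 1 = a + of_int (k + 1)" by simp
  with \<open>a \<in> A\<close> show "z + 1 \<in> Per A" unfolding Per_def by blast
qed

lemma Per_chi_eq_indicator_Per:
  assumes "A \<subseteq> {0..<1}"
  shows "Per_chi A x = of_bool (x \<in> Per A)"
proof -
  have "Per_chi A x = (\<Sum>\<^sub>\<infinity>k\<in>{-\<lfloor>x\<rfloor>}. indicator A (x + of_int k))"
    unfolding Per_chi_def
  proof (rule infsum_cong_neutral)
    fix k :: int
    assume "k \<in> UNIV - {-\<lfloor>x\<rfloor>}"
    moreover have "k = - \<lfloor>x\<rfloor>" if "x + of_int k \<in> {0..<1}"
    proof -
      have "\<lfloor>x + of_int k\<rfloor> = 0" using that by (intro floor_unique) auto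
      then show ?thesis by simp
    qed
    ultimately have "x + of_int k \<notin> {0..<1}" by blast
    then show "indicator A (x + of_int k) = (0::real)"
      using assms by (auto simp: indicator_def)
  qed auto
  also have "\<dots> = indicator A (frac x)" by (simp add: frac_def)
  finally show ?thesis using mem_Per_iff_frac[OF assms] by (simp add: indicator_def)
qed

lemma mem_dil_iff:
  assumes "c \<noteq> 0"
  shows "z \<in> dil c A \<longleftrightarrow> z / c \<in> A"
proof
  assume "z / c \<in> A"
  moreover have "z = c * (z / c)" using assms by simp
  ultimately show "z \<in> dil c A" unfolding dil_def by blast
qed (use assms in \<open>auto simp: dil_def\<close>)

lemma mem_Fset_iff: "y \<in> Fset A \<longleftrightarrow> (\<forall>n\<ge>1. y / 2 ^ n \<in> Per A)"
  by (auto simp: Fset_def mem_dil_iff)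

section \<open>Null sets under affine maps\<close>

lemma AE_lebesgue_affine:
  fixes a c :: real
  assumes "AE x in lebesgue. P x" "c \<noteq> 0"
  shows "AE x in lebesgue. P (a + c * x)"
proof -
  from assms(1) obtain N where N: "negligible N" "{x. \<not> P x} \<subseteq> N"
    unfolding eventually_ae_filter_negligible by blast
  have "negligible ((\<lambda>y. (y - a) / c) ` N)"
    by (rule negligible_differentiable_image_negligible)
      (auto intro: N(1) differentiable_on_mult differentiable_on_diff simp: divide_inverse)
  moreover have "{x. \<not> P (a + c * x)} \<subseteq> (\<lambda>y. (y - a) / c) ` N"
  proof
    fix x assume "x \<in> {x. \<not> P (a + c * x)}"
    then have "a + c * x \<in> N" using N(2) by auto
    moreover have "x = ((a + c * x) - a) / c" using assms(2) by simp
    ultimately show "x \<in> (\<lambda>y. (y - a) / c) ` N" by blast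
  qed
  ultimately show ?thesis
    unfolding eventually_ae_filter_negligible by (meson negligible_subset)
qed

lemma AE_lebesgue_affine_all:
  fixes a c :: "'i::countable \<Rightarrow> real"
  assumes "AE x in lebesgue. P x" "\<And>i. c i \<noteq> 0"
  shows "AE x in lebesgue. \<forall>i. P (a i + c i * x)"
  using AE_lebesgue_affine[OF assms] by (simp add: AE_all_countable)

lemma AE_lebesgue_iff_null_sets:
  "(AE x in lebesgue. P x) \<longleftrightarrow> {x. \<not> P x} \<in> null_sets lebesgue"
  unfolding eventually_ae_filter_negligible negligible_iff_null_sets[symmetric]
  by (meson negligible_subset order_refl)

lemma AE_lebesgue_iff_AE_unit_interval:
  fixes Q :: "real \<Rightarrow> bool"
  assumes half_invariant: "\<And>x. Q (x / 2) \<longleftrightarrow> Q x"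
  shows "(AE x in lebesgue. Q x) \<longleftrightarrow> (AE x in lebesgue. x \<in> {0..<1} \<longrightarrow> Q x \<and> Q (x - 1))"
proof
  assume "AE x in lebesgue. Q x"
  moreover from AE_lebesgue_affine[OF this, where a = "-1" and c = 1]
  have "AE x in lebesgue. Q (x - 1)" by simp
  ultimately show "AE x in lebesgue. x \<in> {0..<1} \<longrightarrow> Q x \<and> Q (x - 1)"
    by eventually_elim simp
next
  assume unit: "AE x in lebesgue. x \<in> {0..<1} \<longrightarrow> Q x \<and> Q (x - 1)"
  from AE_lebesgue_affine[OF this, where a = 1 and c = 1]
  have "AE x in lebesgue. x + 1 \<in> {0..<1} \<longrightarrow> Q x"
    by (rule eventually_mono) (auto simp: add.commute)
  with unit have "AE x in lebesgue. x \<in> {-1..<1} \<longrightarrow> Q x"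
  proof eventually_elim
    case (elim x)
    then show ?case by (cases "0 \<le> x") auto
  qed
  from AE_lebesgue_affine_all[OF this, where a = "\<lambda>_. 0" and c = "\<lambda>k::nat. 1 / 2 ^ k"]
  have "AE x in lebesgue. \<forall>k::nat. x / 2 ^ k \<in> {-1..<1} \<longrightarrow> Q (x / 2 ^ k)" by simp
  moreover have "Q (x / 2 ^ k) \<longleftrightarrow> Q x" for x k
    by (induction k arbitrary: x) (simp_all add: half_invariant flip: divide_divide_eq_left)
  moreover have "\<exists>k::nat. x / 2 ^ k \<in> {-1..<1}" for x :: real
  proof -
    obtain k :: nat where "\<bar>x\<bar> < real k" using reals_Archimedean2 by blast
    also have "real k < 2 ^ k" using of_nat_less_two_power[of k] by simp
    finally show ?thesis by (intro exI[of _ k]) (auto simp: abs_less_iff field_simps)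
  qed
  ultimately show "AE x in lebesgue. Q x" by (auto elim: eventually_mono)
qed

section \<open>The dyadic tail condition\<close>

definition tail_in_Per :: "real set \<Rightarrow> real \<Rightarrow> bool" where
  "tail_in_Per A x \<longleftrightarrow> (\<forall>\<^sub>F n in sequentially. x / 2 ^ n \<in> Per A)"

lemma tendsto_of_bool_one_iff:
  "((\<lambda>n. of_bool (P n) :: real) \<longlonglongrightarrow> 1) \<longleftrightarrow> (\<forall>\<^sub>F n in sequentially. P n)"
proof
  assume "(\<lambda>n. of_bool (P n) :: real) \<longlonglongrightarrow> 1"
  from tendstoD[OF this, of "1/2"] show "\<forall>\<^sub>F n in sequentially. P n"
    by (rule eventually_mono) (auto simp: of_bool_def split: if_splits)
next
  assume "\<forall>\<^sub>F n in sequentially. P n"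
  then have "\<forall>\<^sub>F n in sequentially. (of_bool (P n) :: real) = 1"
    by (rule eventually_mono) simp
  then show "(\<lambda>n. of_bool (P n) :: real) \<longlonglongrightarrow> 1" by (rule tendsto_eventually)
qed

lemma tail_in_Per_divide_pow2: "tail_in_Per A (x / 2 ^ k) \<longleftrightarrow> tail_in_Per A x"
  using eventually_sequentially_seg[of "\<lambda>n. x / 2 ^ n \<in> Per A" k]
  by (simp add: tail_in_Per_def power_add mult.commute)

lemma eventually_in_Fset_iff: "(\<forall>\<^sub>F n in sequentially. x / 2 ^ n \<in> Fset A) \<longleftrightarrow> tail_in_Per A x"
proof
  assume "\<forall>\<^sub>F n in sequentially. x / 2 ^ n \<in> Fset A"
  then have "\<forall>\<^sub>F n in sequentially. x / 2 ^ Suc n \<in> Per A"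
    by (rule eventually_mono) (auto simp: mem_Fset_iff mult.commute dest: spec[of _ 1])
  then show "tail_in_Per A x"
    using eventually_sequentially_Suc[of "\<lambda>n. x / 2 ^ n \<in> Per A"]
    by (simp add: tail_in_Per_def)
next
  assume "tail_in_Per A x"
  from eventually_all_ge_at_top[OF this[unfolded tail_in_Per_def]]
  show "\<forall>\<^sub>F n in sequentially. x / 2 ^ n \<in> Fset A"
    by (rule eventually_mono) (simp add: mem_Fset_iff flip: power_add)
qed

lemma mem_dilated_Fset_iff:
  "x \<in> (\<Union>n\<in>{1::nat..}. dil (2 ^ n) (Fset A)) \<longleftrightarrow> tail_in_Per A x"
proof
  assume "x \<in> (\<Union>n\<in>{1::nat..}. dil (2 ^ n) (Fset A))"
  then obtain n where "x / 2 ^ n \<in> Fset A" by (auto simp: mem_dil_iff)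
  then have "x / 2 ^ m \<in> Per A" if "m \<ge> Suc n" for m
    using that by (auto simp: mem_Fset_iff simp flip: power_add dest!: spec[of _ "m - n"])
  then show "tail_in_Per A x" unfolding tail_in_Per_def eventually_sequentially by blast
next
  assume "tail_in_Per A x"
  then obtain N where "\<forall>m\<ge>N. x / 2 ^ m \<in> Per A"
    unfolding tail_in_Per_def eventually_sequentially by blast
  then have "x / 2 ^ Suc N \<in> Fset A" by (simp add: mem_Fset_iff del: power_Suc flip: power_add)
  then show "x \<in> (\<Union>n\<in>{1::nat..}. dil (2 ^ n) (Fset A))"
    by (auto simp: mem_dil_iff simp del: power_Suc intro!: bexI[of _ "Suc N"])
qed

lemma tau0_funpow: "(tau0 ^^ n) x = x / 2 ^ n"
  by (induction n) (auto simp: tau0_def)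

lemma tau1_funpow: "(tau1 ^^ n) x = (x - 1) / 2 ^ n + 1"
  by (induction n) (auto simp: tau1_def field_simps)

lemma funpow_tau_in_unit_interval:
  assumes "x \<in> {0..<1}"
  shows "(tau0 ^^ n) x \<in> {0..<1}" and "(tau1 ^^ n) x \<in> {0..<1}"
  using assms by (induction n) (auto simp: tau0_def tau1_def)

lemma tendsto_Per_chi_tau_iff:
  assumes "A \<subseteq> {0..<1}"
  shows "((\<lambda>n. Per_chi A ((tau0 ^^ n) x)) \<longlonglongrightarrow> 1) \<and> ((\<lambda>n. Per_chi A ((tau1 ^^ n) x)) \<longlonglongrightarrow> 1)
    \<longleftrightarrow> tail_in_Per A x \<and> tail_in_Per A (x - 1)"
  by (simp only: Per_chi_eq_indicator_Per[OF assms] tendsto_of_bool_one_iff tau0_funpow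
      tau1_funpow add_one_mem_Per_iff tail_in_Per_def)

section \<open>Chosen paths\<close>

abbreviation tau_word :: "real \<Rightarrow> nat list \<Rightarrow> real" where
  "tau_word x eta \<equiv> foldl (\<lambda>y d. tau d y) x eta"

lemma tau_0 [simp]: "tau 0 = tau0" and tau_Suc_0 [simp]: "tau (Suc 0) = tau1"
  by (simp_all add: tau_def)

lemma tau_word_replicate: "tau_word y (replicate n d) = (tau d ^^ n) y"
  by (induction n arbitrary: y) (auto simp: funpow_swap1)

lemma tau_word_affine: "tau_word x eta = tau_word 0 eta + x / 2 ^ length eta"
  by (induction eta rule: rev_induct) (auto simp: tau_def tau0_def tau1_def field_simps)

lemma tau_word_in_unit_interval: "x \<in> {0..<1} \<Longrightarrow> tau_word x eta \<in> {0..<1}"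
  by (induction eta rule: rev_induct) (auto simp: tau_def tau0_def tau1_def)

lemma omega_eq_const_iff:
  "omega M y = (\<lambda>_. d) \<longleftrightarrow> (\<forall>k. digit M ((tau d ^^ k) y) = d)"
proof
  assume const: "omega M y = (\<lambda>_. d)"
  then have "pathpt M y (Suc n) = tau d (pathpt M y n)" for n
    by (metis omega_def pathpt.simps(2))
  then have "pathpt M y n = (tau d ^^ n) y" for n
    by (induction n) (simp_all del: pathpt.simps(2))
  with const show "\<forall>k. digit M ((tau d ^^ k) y) = d"
    by (simp add: omega_def fun_eq_iff)
next
  assume digits: "\<forall>k. digit M ((tau d ^^ k) y) = d"
  have "pathpt M y n = (tau d ^^ n) y" for n
    by (induction n) (simp_all add: digits)
  with digits show "omega M y = (\<lambda>_. d)"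
    by (simp add: omega_def fun_eq_iff)
qed

lemma ex_all_ge_all_add_iff_eventually:
  "(\<exists>N. \<forall>n\<ge>N. \<forall>k. P (k + n)) \<longleftrightarrow> (\<forall>\<^sub>F n in sequentially. P n)"
  unfolding eventually_sequentially
proof
  assume "\<exists>N. \<forall>n\<ge>N. P n"
  then show "\<exists>N. \<forall>n\<ge>N. \<forall>k. P (k + n)" by (metis le_add2 le_trans)
qed (metis add_0)

lemma eventually_omega_funpow_tau_iff:
  "(\<exists>N. \<forall>n\<ge>N. omega M ((tau d ^^ n) x) = (\<lambda>_. d))
    \<longleftrightarrow> (\<forall>\<^sub>F n in sequentially. digit M ((tau d ^^ n) x) = d)"
proof -
  have "omega M ((tau d ^^ n) x) = (\<lambda>_. d) \<longleftrightarrow> (\<forall>k. digit M ((tau d ^^ (k + n)) x) = d)" for n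
    by (simp add: omega_eq_const_iff funpow_add)
  then show ?thesis
    using ex_all_ge_all_add_iff_eventually[of "\<lambda>n. digit M ((tau d ^^ n) x) = d"] by simp
qed

definition paths_eventually_constant :: "real set \<Rightarrow> real \<Rightarrow> bool" where
  "paths_eventually_constant M x \<longleftrightarrow>
     (\<exists>N. \<forall>n\<ge>N. omega M ((tau0 ^^ n) x) = (\<lambda>_. 0)) \<and> (\<exists>N. \<forall>n\<ge>N. omega M ((tau1 ^^ n) x) = (\<lambda>_. 1))"

definition constant_tails_in_Aset :: "real set \<Rightarrow> real \<Rightarrow> bool" where
  "constant_tails_in_Aset M x \<longleftrightarrow>
     (\<forall>eta. set eta \<subseteq> {0, 1} \<longrightarrow> conc eta (\<lambda>_. 0) \<in> Aset M x \<and> conc eta (\<lambda>_. 1) \<in> Aset M x)"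

lemma eventually_digit_if_const_in_Aset:
  assumes "(\<lambda>_. d) \<in> Aset M x"
  shows "\<forall>\<^sub>F n in sequentially. digit M ((tau d ^^ n) x) = d"
proof -
  from assms obtain eta where eta: "set eta \<subseteq> {0, 1}"
    "(\<lambda>_. d) = conc eta (omega M (tau_word x eta))"
    unfolding Aset_def by auto
  then have "eta ! i = d" if "i < length eta" for i
    using fun_cong[OF eta(2), of i] that by (simp add: conc_def)
  then have "eta = replicate (length eta) d" by (simp add: list_eq_iff_nth_eq)
  then have "tau_word x eta = (tau d ^^ length eta) x" by (metis tau_word_replicate)
  moreover have "omega M (tau_word x eta) = (\<lambda>_. d)"
    using fun_cong[OF eta(2), of "length eta + _"] by (auto simp: conc_def)
  ultimately have "\<forall>k. digit M ((tau d ^^ (k + length eta)) x) = d"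
    by (simp add: omega_eq_const_iff funpow_add)
  then show ?thesis
    unfolding eventually_sequentially by (metis le_add_diff_inverse2)
qed

lemma conc_const_in_AsetI:
  assumes "\<forall>\<^sub>F n in sequentially. digit M ((tau d ^^ n) (tau_word x eta)) = d"
    and "set eta \<subseteq> {0, 1}" "d \<in> {0, 1}"
  shows "conc eta (\<lambda>_. d) \<in> Aset M x"
proof -
  from assms(1) obtain N where "omega M ((tau d ^^ N) (tau_word x eta)) = (\<lambda>_. d)"
    by (auto simp flip: eventually_omega_funpow_tau_iff)
  then have "conc eta (\<lambda>_. d)
      = conc (eta @ replicate N d) (omega M (tau_word x (eta @ replicate N d)))"
    by (auto simp: conc_def nth_append tau_word_replicate)
  moreover have "set (eta @ replicate N d) \<subseteq> {0, 1}" using assms(2,3) by auto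
  ultimately show ?thesis unfolding Aset_def by blast
qed

lemma paths_eventually_constant_iff_eventually_digit:
  "paths_eventually_constant M x \<longleftrightarrow>
     (\<forall>\<^sub>F n in sequentially. digit M ((tau0 ^^ n) x) = 0) \<and>
     (\<forall>\<^sub>F n in sequentially. digit M ((tau1 ^^ n) x) = 1)"
  using eventually_omega_funpow_tau_iff[of M 0 x] eventually_omega_funpow_tau_iff[of M 1 x]
  by (simp add: paths_eventually_constant_def)

lemma paths_eventually_constant_if_constant_tails_in_Aset:
  assumes "constant_tails_in_Aset M x"
  shows "paths_eventually_constant M x"
proof -
  have "conc [] w = w" for w :: "nat \<Rightarrow> nat" by (simp add: conc_def)
  then have "(\<lambda>_. 0) \<in> Aset M x" "(\<lambda>_. 1) \<in> Aset M x"
    using assms unfolding constant_tails_in_Aset_def by (metis empty_set empty_subsetI)+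
  then show ?thesis
    using eventually_digit_if_const_in_Aset[of 0] eventually_digit_if_const_in_Aset[of 1]
    by (simp add: paths_eventually_constant_iff_eventually_digit)
qed

lemma constant_tails_in_AsetI:
  assumes "\<And>eta. set eta \<subseteq> {0, 1} \<Longrightarrow> paths_eventually_constant M (tau_word x eta)"
  shows "constant_tails_in_Aset M x"
  unfolding constant_tails_in_Aset_def
  using assms conc_const_in_AsetI[where d = 0] conc_const_in_AsetI[where d = 1]
  by (simp add: paths_eventually_constant_iff_eventually_digit)

lemma AE_constant_tails_in_Aset_iff:
  "(AE x in lebesgue. x \<in> {0..<1} \<longrightarrow> constant_tails_in_Aset M x)
    \<longleftrightarrow> (AE x in lebesgue. x \<in> {0..<1} \<longrightarrow> paths_eventually_constant M x)"
proof
  assume "AE x in lebesgue. x \<in> {0..<1} \<longrightarrow> constant_tails_in_Aset M x"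
  then show "AE x in lebesgue. x \<in> {0..<1} \<longrightarrow> paths_eventually_constant M x"
    by (rule eventually_mono) (simp add: paths_eventually_constant_if_constant_tails_in_Aset)
next
  assume "AE x in lebesgue. x \<in> {0..<1} \<longrightarrow> paths_eventually_constant M x"
  from AE_lebesgue_affine_all[OF this,
      where a = "\<lambda>eta. tau_word 0 eta" and c = "\<lambda>eta. 1 / 2 ^ length eta"]
  have "AE x in lebesgue. \<forall>eta. tau_word x eta \<in> {0..<1} \<longrightarrow>
      paths_eventually_constant M (tau_word x eta)"
    by (simp flip: tau_word_affine)
  then show "AE x in lebesgue. x \<in> {0..<1} \<longrightarrow> constant_tails_in_Aset M x"
    by (rule eventually_mono) (metis constant_tails_in_AsetI tau_word_in_unit_interval)
qed

section \<open>Constant paths and the tail condition\<close>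

lemma shift_eq_if_unit_interval:
  "m \<in> {0..<1} \<Longrightarrow> shift m = (if m < 1/2 then m + 1/2 else m - 1/2)"
  unfolding shift_def frac_def by (auto simp: floor_eq_iff)

lemma AE_tau0_mem_iff_tau1_not_mem:
  assumes M_sub: "M \<subseteq> {0..<1}"
    and disj: "M \<inter> shift ` M \<in> null_sets lebesgue"
    and cover: "({0..<1} - (M \<union> shift ` M)) \<union> ((M \<union> shift ` M) - {0..<1}) \<in> null_sets lebesgue"
  shows "AE z in lebesgue. z \<in> {0..<1} \<longrightarrow> (tau0 z \<in> M \<longleftrightarrow> tau1 z \<notin> M)"
proof -
  have tau_affine: "0 + 1/2 * z = tau0 z" "1/2 + 1/2 * z = tau1 z" for z
    by (simp_all add: tau0_def tau1_def)
  have "AE z in lebesgue. tau1 z \<notin> M \<inter> shift ` M"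
    using AE_lebesgue_affine[OF AE_not_in[OF disj], where a = "1/2" and c = "1/2"]
    unfolding tau_affine by simp
  moreover have "AE z in lebesgue. tau0 z \<notin> {0..<1} - (M \<union> shift ` M)"
    using AE_lebesgue_affine[OF AE_not_in[OF cover], where a = 0 and c = "1/2"]
    unfolding tau_affine by (auto elim: eventually_mono)
  ultimately show ?thesis
  proof eventually_elim
    case (elim z)
    show ?case
    proof
      assume z: "z \<in> {0..<1}"
      show "tau0 z \<in> M \<longleftrightarrow> tau1 z \<notin> M"
      proof
        assume "tau0 z \<in> M"
        moreover have "shift (tau0 z) = tau1 z"
          using z by (simp add: shift_eq_if_unit_interval tau0_def tau1_def)
        ultimately show "tau1 z \<notin> M" using elim(1) by (metis IntI image_eqI)
      next
        assume "tau1 z \<notin> M"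
        have "tau0 z \<notin> shift ` M"
        proof
          assume "tau0 z \<in> shift ` M"
          then obtain m where "m \<in> M" "tau0 z = shift m" by auto
          moreover from this have "m = tau1 z"
            using M_sub z by (auto simp: shift_eq_if_unit_interval tau0_def tau1_def split: if_splits)
          ultimately show False using \<open>tau1 z \<notin> M\<close> by simp
        qed
        then show "tau0 z \<in> M" using elim(2) z by (auto simp: tau0_def)
      qed
    qed
  qed
qed

lemma eventually_digit_tau0_iff:
  assumes "M \<subseteq> {0..<1}" "x \<in> {0..<1}"
  shows "(\<forall>\<^sub>F n in sequentially. digit M ((tau0 ^^ n) x) = 0) \<longleftrightarrow> tail_in_Per M x"
proof -
  have "digit M ((tau0 ^^ n) x) = 0 \<longleftrightarrow> x / 2 ^ Suc n \<in> Per M" for n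
  proof -
    have "tau0 ((tau0 ^^ n) x) = (tau0 ^^ Suc n) x" by simp
    then show ?thesis
      using mem_Per_iff_mem[OF assms(1) funpow_tau_in_unit_interval(1)[OF assms(2)]]
      by (simp only: digit_def tau0_funpow) simp
  qed
  then show ?thesis
    using eventually_sequentially_Suc[of "\<lambda>n. x / 2 ^ n \<in> Per M"]
    by (simp add: tail_in_Per_def del: power_Suc)
qed

lemma eventually_digit_tau1_iff:
  assumes "M \<subseteq> {0..<1}" "x \<in> {0..<1}"
    and exactly_one: "\<forall>n. tau0 ((tau1 ^^ n) x) \<in> M \<longleftrightarrow> tau1 ((tau1 ^^ n) x) \<notin> M"
  shows "(\<forall>\<^sub>F n in sequentially. digit M ((tau1 ^^ n) x) = 1) \<longleftrightarrow> tail_in_Per M (x - 1)"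
proof -
  have "digit M ((tau1 ^^ n) x) = 1 \<longleftrightarrow> (x - 1) / 2 ^ Suc n \<in> Per M" for n
  proof -
    have "digit M ((tau1 ^^ n) x) = 1 \<longleftrightarrow> (tau1 ^^ Suc n) x \<in> M"
      using exactly_one by (simp add: digit_def)
    also have "\<dots> \<longleftrightarrow> (x - 1) / 2 ^ Suc n \<in> Per M"
      using mem_Per_iff_mem[OF assms(1) funpow_tau_in_unit_interval(2)[OF assms(2)]]
      by (simp only: tau1_funpow add_one_mem_Per_iff)
    finally show ?thesis .
  qed
  then show ?thesis
    using eventually_sequentially_Suc[of "\<lambda>n. (x - 1) / 2 ^ n \<in> Per M"]
    by (simp add: tail_in_Per_def del: power_Suc)
qed

lemma AE_paths_eventually_constant_iff:
  assumes M_sub: "M \<subseteq> {0..<1}"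
    and disj: "M \<inter> shift ` M \<in> null_sets lebesgue"
    and cover: "({0..<1} - (M \<union> shift ` M)) \<union> ((M \<union> shift ` M) - {0..<1}) \<in> null_sets lebesgue"
  shows "(AE x in lebesgue. x \<in> {0..<1} \<longrightarrow> paths_eventually_constant M x)
    \<longleftrightarrow> (AE x in lebesgue. x \<in> {0..<1} \<longrightarrow> tail_in_Per M x \<and> tail_in_Per M (x - 1))"
proof (rule eventually_subst)
  have tau1_funpow_affine: "1 - 1 / 2 ^ n + 1 / 2 ^ n * x = (tau1 ^^ n) x" for n x
    by (simp add: tau1_funpow field_simps)
  have "AE x in lebesgue. \<forall>n. (tau1 ^^ n) x \<in> {0..<1} \<longrightarrow>
      (tau0 ((tau1 ^^ n) x) \<in> M \<longleftrightarrow> tau1 ((tau1 ^^ n) x) \<notin> M)"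
    using AE_lebesgue_affine_all[OF AE_tau0_mem_iff_tau1_not_mem[OF assms],
        where a = "\<lambda>n::nat. 1 - 1 / 2 ^ n" and c = "\<lambda>n. 1 / 2 ^ n"]
    unfolding tau1_funpow_affine by simp
  then show "AE x in lebesgue. (x \<in> {0..<1} \<longrightarrow> paths_eventually_constant M x)
      \<longleftrightarrow> (x \<in> {0..<1} \<longrightarrow> tail_in_Per M x \<and> tail_in_Per M (x - 1))"
  proof eventually_elim
    case (elim x)
    show ?case
    proof (rule imp_cong[OF refl])
      assume x: "x \<in> {0..<1}"
      with elim funpow_tau_in_unit_interval(2)
      show "paths_eventually_constant M x \<longleftrightarrow> tail_in_Per M x \<and> tail_in_Per M (x - 1)"
        unfolding paths_eventually_constant_iff_eventually_digit
        using eventually_digit_tau0_iff[OF M_sub x] eventually_digit_tau1_iff[OF M_sub x] by blast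
    qed
  qed
qed

theorem proposition3p16:
  fixes M :: "real set"
  assumes M_sub: "M \<subseteq> {0..<1}"
    and M_meas: "M \<in> sets lebesgue"
    and disj: "M \<inter> shift ` M \<in> null_sets lebesgue"
    and cover: "({0..<1} - (M \<union> shift ` M)) \<union> ((M \<union> shift ` M) - {0..<1}) \<in> null_sets lebesgue"
  defines "m0 \<equiv> Per_chi M"
    and "F \<equiv> Fset M"
  defines "phi \<equiv> (indicator F :: real \<Rightarrow> real)"
  defines "c1 \<equiv> (AE x in lebesgue. (\<lambda>n. phi (x / 2 ^ n)) \<longlonglongrightarrow> 1)"
    and "c2 \<equiv> (UNIV - (\<Union>n\<in>{1::nat..}. dil (2 ^ n) F) \<in> null_sets lebesgue)"
    and "c3 \<equiv> (AE x in lebesgue. (\<lambda>n. m0 (x / 2 ^ n)) \<longlonglongrightarrow> 1)"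
    and "c4 \<equiv> (AE x in lebesgue. x \<in> {0..<1} \<longrightarrow>
                 ((\<lambda>n. m0 ((tau0 ^^ n) x)) \<longlonglongrightarrow> 1) \<and> ((\<lambda>n. m0 ((tau1 ^^ n) x)) \<longlonglongrightarrow> 1))"
    and "c5 \<equiv> (AE x in lebesgue. x \<in> {0..<1} \<longrightarrow>
                 (\<exists>N. \<forall>n\<ge>N. omega M ((tau0 ^^ n) x) = (\<lambda>_. 0)) \<and>
                 (\<exists>N. \<forall>n\<ge>N. omega M ((tau1 ^^ n) x) = (\<lambda>_. 1)))"
    and "c6 \<equiv> (AE x in lebesgue. x \<in> {0..<1} \<longrightarrow>
                 (\<forall>eta. set eta \<subseteq> {0, 1} \<longrightarrow>
                    conc eta (\<lambda>_. 0) \<in> Aset M x \<and> conc eta (\<lambda>_. 1) \<in> Aset M x))"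
  shows "(c1 \<longleftrightarrow> c2) \<and> (c2 \<longleftrightarrow> c3) \<and> (c3 \<longleftrightarrow> c4) \<and> (c4 \<longleftrightarrow> c5) \<and> (c5 \<longleftrightarrow> c6)"
proof -
  have c1: "c1 \<longleftrightarrow> (AE x in lebesgue. tail_in_Per M x)"
    by (simp add: c1_def phi_def F_def indicator_def tendsto_of_bool_one_iff eventually_in_Fset_iff)
  have "UNIV - (\<Union>n\<in>{1::nat..}. dil (2 ^ n) F) = {x. \<not> tail_in_Per M x}"
    using mem_dilated_Fset_iff unfolding F_def by blast
  then have c2: "c2 \<longleftrightarrow> (AE x in lebesgue. tail_in_Per M x)"
    by (simp add: c2_def AE_lebesgue_iff_null_sets)
  have c3: "c3 \<longleftrightarrow> (AE x in lebesgue. tail_in_Per M x)"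
    by (simp add: c3_def m0_def Per_chi_eq_indicator_Per[OF M_sub] tendsto_of_bool_one_iff
        tail_in_Per_def)
  have c4: "c4 \<longleftrightarrow> (AE x in lebesgue. x \<in> {0..<1} \<longrightarrow> tail_in_Per M x \<and> tail_in_Per M (x - 1))"
    unfolding c4_def m0_def tendsto_Per_chi_tau_iff[OF M_sub] ..
  have c5: "c5 \<longleftrightarrow> (AE x in lebesgue. x \<in> {0..<1} \<longrightarrow> paths_eventually_constant M x)"
    unfolding c5_def paths_eventually_constant_def ..
  have c6: "c6 \<longleftrightarrow> (AE x in lebesgue. x \<in> {0..<1} \<longrightarrow> constant_tails_in_Aset M x)"
    unfolding c6_def constant_tails_in_Aset_def ..
  have "tail_in_Per M (x / 2) \<longleftrightarrow> tail_in_Per M x" for x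
    using tail_in_Per_divide_pow2[of M x 1] by simp
  from AE_lebesgue_iff_AE_unit_interval[where Q = "tail_in_Per M", OF this]
  show ?thesis
    unfolding c1 c2 c3 c4 c5 c6 AE_paths_eventually_constant_iff[OF M_sub disj cover]
      AE_constant_tails_in_Aset_iff
    by simp
qed

end
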